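(* Let $A$, $B$, $C$ be commutative associative unital algebras over $\mathbb{C}$ or $\mathbb{R}$. If $\mathbf{g}\colon A\to B$ is an $m$-homomorphism and $\mathbf{f}\colon B\to C$ is an $n$-homomorphism, then $\mathbf{f}\circ\mathbf{g}\colon A\to C$ is an $nm$-homomorphism.
   Context: For a linear map $\mathbf{f}\colon A\to B$, its characteristic function is the formal power series $R(\mathbf{f},a,z)=\exp\bigl(\mathbf{f}(\ln(1+az))\bigr)\in B[[z]]$, where $\ln(1+az)=\sum_{k\ge1}(-1)^{k-1}a^kz^k/k$ and $\mathbf{f}$ is applied coefficientwise. For an integer $n\ge0$, a linear map $\mathbf{f}$ is an $n$-homomorphism if $\mathbf{f}(1)=n$ and $R(\mathbf{f},a,z)$ is a polynomial in $z$ of degree at most $n$ for every $a$ in its domain. *)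

theory Defs
  imports "HOL-Computational_Algebra.Formal_Power_Series"
begin

text \<open>A commutative associative unital algebra over a field 'k is modelled as a
commutative ring type 'a together with an explicit scalar multiplication
sc :: 'k => 'a => 'a satisfying the algebra axioms.\<close>

definition is_comm_alg :: "('k::field_char_0 \<Rightarrow> 'a::comm_ring_1 \<Rightarrow> 'a) \<Rightarrow> bool" where
  "is_comm_alg sc \<longleftrightarrow>
     (\<forall>c x y. sc c (x + y) = sc c x + sc c y) \<and>
     (\<forall>c d x. sc (c + d) x = sc c x + sc d x) \<and>
     (\<forall>c d x. sc c (sc d x) = sc (c * d) x) \<and>
     (\<forall>x. sc 1 x = x) \<and>
     (\<forall>c x y. sc c (x * y) = sc c x * y)"

definition is_lin_map ::
  "('k::field_char_0 \<Rightarrow> 'a::comm_ring_1 \<Rightarrow> 'a) \<Rightarrow> ('k \<Rightarrow> 'b::comm_ring_1 \<Rightarrow> 'b) \<Rightarrow> ('a \<Rightarrow> 'b) \<Rightarrow> bool" where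
  "is_lin_map scA scB f \<longleftrightarrow>
     (\<forall>x y. f (x + y) = f x + f y) \<and> (\<forall>c x. f (scA c x) = scB c (f x))"

definition fps_ln1p :: "('k::field_char_0 \<Rightarrow> 'a::comm_ring_1 \<Rightarrow> 'a) \<Rightarrow> 'a \<Rightarrow> 'a fps" where
  "fps_ln1p sc a = Abs_fps (\<lambda>k. if k = 0 then 0
       else sc ((- 1) ^ (k - 1) / of_nat k) (a ^ k))"

definition fps_map_coeff :: "('a \<Rightarrow> 'b) \<Rightarrow> 'a fps \<Rightarrow> 'b::zero fps" where
  "fps_map_coeff f g = Abs_fps (\<lambda>k. f (fps_nth g k))"

text \<open>exp(g) = sum_j g^j / j! for a power series g with zero constant term
  (the sum is finite in each coefficient).\<close>
definition fps_exp_alg :: "('k::field_char_0 \<Rightarrow> 'a::comm_ring_1 \<Rightarrow> 'a) \<Rightarrow> 'a fps \<Rightarrow> 'a fps" where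
  "fps_exp_alg sc g = Abs_fps (\<lambda>n. \<Sum>j\<le>n. sc (1 / fact j) (fps_nth (g ^ j) n))"

definition char_fun ::
  "('k::field_char_0 \<Rightarrow> 'a::comm_ring_1 \<Rightarrow> 'a) \<Rightarrow> ('k \<Rightarrow> 'b::comm_ring_1 \<Rightarrow> 'b) \<Rightarrow> ('a \<Rightarrow> 'b) \<Rightarrow> 'a \<Rightarrow> 'b fps" where
  "char_fun scA scB f a = fps_exp_alg scB (fps_map_coeff f (fps_ln1p scA a))"

definition is_n_hom ::
  "('k::field_char_0 \<Rightarrow> 'a::comm_ring_1 \<Rightarrow> 'a) \<Rightarrow> ('k \<Rightarrow> 'b::comm_ring_1 \<Rightarrow> 'b) \<Rightarrow> nat \<Rightarrow> ('a \<Rightarrow> 'b) \<Rightarrow> bool" where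
  "is_n_hom scA scB n f \<longleftrightarrow>
     is_lin_map scA scB f \<and> f 1 = of_nat n \<and>
     (\<forall>a. \<forall>k>n. fps_nth (char_fun scA scB f a) k = 0)"

end

(*
  Write P = exp L for L = g (ln (1 + a z)); as g is an m-homomorphism, P = 1 + z a(z) for a
  polynomial a(t) of degree < m over B.  In B[t][[X]] the series l = ln (1 + X a(t)) collapses
  to L under the substitution t = X = z, which is a ring homomorphism commuting with exp.
  Hence exp (f L) is the collapse of W = exp (f[t] l), the characteristic function at a of the
  coefficientwise extension f[t] : B[t] -> C[t].  Evaluating t at scalars shows that f[t] is
  again an n-homomorphism, so W has degree <= n in X, while its X^d coefficient has degree
  <= (m - 1) d in t.  After collapsing, only the powers z^k with k <= n m survive.
*)

theory Submission
  imports Defs "HOL-Computational_Algebra.Polynomial_FPS"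
begin

unbundle fps_syntax

locale comm_ring_hom = additive hom
  for hom :: "'a::comm_ring_1 \<Rightarrow> 'b::comm_ring_1" +
  assumes mult: "hom (x * y) = hom x * hom y"
    and one: "hom 1 = 1"
begin

lemma power: "hom (x ^ n) = hom x ^ n"
  by (induction n) (simp_all add: mult one)

lemma of_nat: "hom (of_nat n) = of_nat n"
  by (induction n) (simp_all add: add one zero)

end

definition of_scalar :: "('k::field_char_0 \<Rightarrow> 'a::comm_ring_1 \<Rightarrow> 'a) \<Rightarrow> 'k \<Rightarrow> 'a" where
  "of_scalar sc c = sc c 1"

locale comm_alg =
  fixes sc :: "'k::field_char_0 \<Rightarrow> 'a::comm_ring_1 \<Rightarrow> 'a"
  assumes is_comm_alg: "is_comm_alg sc"
begin

lemma scale_eq_of_scalar_mult: "sc c x = of_scalar sc c * x"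
  using is_comm_alg unfolding is_comm_alg_def of_scalar_def by (metis mult_1)

sublocale of_scalar: comm_ring_hom "of_scalar sc"
proof
  show "of_scalar sc (c + d) = of_scalar sc c + of_scalar sc d" for c d
    using is_comm_alg unfolding is_comm_alg_def of_scalar_def by blast
  show "of_scalar sc (c * d) = of_scalar sc c * of_scalar sc d" for c d
    using is_comm_alg unfolding is_comm_alg_def by (metis of_scalar_def scale_eq_of_scalar_mult)
  show "of_scalar sc 1 = 1"
    using is_comm_alg unfolding is_comm_alg_def of_scalar_def by blast
qed

lemma of_scalar_mult_cancel:
  assumes "c \<noteq> 0" and "of_scalar sc c * x = of_scalar sc c * y"
  shows "x = y"
proof -
  have "of_scalar sc (inverse c) * of_scalar sc c = 1"
    using assms(1) by (simp flip: of_scalar.mult add: of_scalar.one)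
  then show ?thesis
    using assms(2) by (metis mult.assoc mult_1)
qed

lemma of_nat_mult_cancel:
  assumes "n \<noteq> 0" and "of_nat n * x = of_nat n * (y :: 'a)"
  shows "x = y"
  using of_scalar_mult_cancel[of "of_nat n"] assms by (simp add: of_scalar.of_nat)

(* The algebra need not be a domain, but differences of distinct scalars are invertible,
   which is all the factor theorem needs. *)
lemma poly_eq_0_if_vanishes_on_scalars:
  assumes "infinite S" and "\<And>l. l \<in> S \<Longrightarrow> poly p (of_scalar sc l) = 0"
  shows "p = 0"
  using assms
proof (induction "degree p" arbitrary: p S)
  case 0
  then obtain l where "l \<in> S"
    by (metis finite.emptyI ex_in_conv)
  moreover obtain c where "p = [:c:]"
    using degree_eq_zeroE 0(1) by metis
  ultimately show ?case
    using 0(3) by fastforce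
next
  case (Suc n)
  then obtain l where l: "l \<in> S"
    by (metis finite.emptyI ex_in_conv)
  define q where "q = synthetic_div p (of_scalar sc l)"
  have p: "p = [:- of_scalar sc l, 1:] * q"
    using synthetic_div_correct'[of "of_scalar sc l" p] Suc.prems(2)[OF l] by (simp add: q_def)
  have "q = 0"
  proof (rule Suc.hyps)
    show "n = degree q"
      using Suc.hyps(2) by (simp add: q_def degree_synthetic_div)
    show "infinite (S - {l})"
      using Suc.prems(1) by simp
    fix l' assume l': "l' \<in> S - {l}"
    have "of_scalar sc (l' - l) * poly q (of_scalar sc l') = of_scalar sc (l' - l) * 0"
      using Suc.prems(2)[of l'] l' p by (simp add: of_scalar.diff algebra_simps)
    then show "poly q (of_scalar sc l') = 0"
      by (rule of_scalar_mult_cancel[rotated]) (use l' in simp)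
  qed
  then show ?case
    using p by simp
qed

lemma fps_eq_if_deriv_eq:
  assumes "fps_deriv X = fps_deriv Y" and "X $ 0 = (Y $ 0 :: 'a)"
  shows "X = Y"
proof (rule fps_ext)
  fix k show "X $ k = Y $ k"
  proof (cases k)
    case (Suc j)
    have "of_nat (Suc j) * X $ Suc j = of_nat (Suc j) * Y $ Suc j"
      using arg_cong[OF assms(1), of "\<lambda>F. F $ j"] by simp
    then show ?thesis using of_nat_mult_cancel Suc by blast
  qed (use assms in simp)
qed

lemma fps_exp_alg_nth:
  "fps_exp_alg sc M $ k = (\<Sum>j\<le>k. of_scalar sc (1 / fact j) * (M ^ j $ k))"
  unfolding fps_exp_alg_def by (simp add: scale_eq_of_scalar_mult)

lemma fps_exp_alg_nth_0 [simp]: "fps_exp_alg sc M $ 0 = 1"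
  by (simp add: fps_exp_alg_nth of_scalar.one)

definition exp_trunc :: "'a fps \<Rightarrow> nat \<Rightarrow> 'a fps" where
  "exp_trunc M N = (\<Sum>j\<le>N. fps_const (of_scalar sc (1 / fact j)) * M ^ j)"

lemma fps_exp_alg_nth_eq_exp_trunc_nth:
  assumes "M $ 0 = 0" and "k \<le> N"
  shows "fps_exp_alg sc M $ k = exp_trunc M N $ k"
proof -
  have "exp_trunc M N $ k = (\<Sum>j\<le>N. of_scalar sc (1 / fact j) * (M ^ j $ k))"
    unfolding exp_trunc_def by (simp add: fps_sum_nth)
  also have "\<dots> = (\<Sum>j\<le>k. of_scalar sc (1 / fact j) * (M ^ j $ k))"
    by (rule sum.mono_neutral_right)
      (use assms startsby_zero_power_prefix[OF assms(1)] in auto)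
  finally show ?thesis by (simp add: fps_exp_alg_nth)
qed

lemma fps_deriv_exp_trunc: "fps_deriv (exp_trunc M (Suc N)) = fps_deriv M * exp_trunc M N"
proof -
  have coeff: "of_scalar sc (1 / fact (Suc j)) * of_nat (Suc j) = of_scalar sc (1 / fact j)" for j
  proof -
    have "(1 / fact (Suc j) :: 'k) * of_nat (Suc j) = 1 / fact j"
      by (simp add: fact_Suc del: of_nat_Suc)
    then show ?thesis by (metis of_scalar.mult of_scalar.of_nat)
  qed
  have "fps_deriv (exp_trunc M (Suc N)) = (\<Sum>j\<le>Suc N.
      fps_const (of_scalar sc (1 / fact j)) * (fps_const (of_nat j) * fps_deriv M * M ^ (j - 1)))"
    by (simp only: exp_trunc_def fps_deriv_sum fps_deriv_mult_const_left fps_deriv_power)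
  also have "\<dots> = (\<Sum>j\<le>N. fps_deriv M *
      (fps_const (of_scalar sc (1 / fact (Suc j)) * of_nat (Suc j)) * M ^ j))"
    by (simp only: sum.atMost_Suc_shift) (simp add: mult_ac)
  also have "\<dots> = fps_deriv M * exp_trunc M N"
    by (simp only: coeff exp_trunc_def sum_distrib_left)
  finally show ?thesis .
qed

lemma fps_deriv_fps_exp_alg:
  assumes "M $ 0 = 0"
  shows "fps_deriv (fps_exp_alg sc M) = fps_deriv M * fps_exp_alg sc M"
proof (rule fps_ext)
  fix k
  have "fps_deriv (fps_exp_alg sc M) $ k = fps_deriv (exp_trunc M (Suc k)) $ k"
    using fps_exp_alg_nth_eq_exp_trunc_nth[OF assms, of "Suc k" "Suc k"] by simp
  also have "\<dots> = (fps_deriv M * exp_trunc M k) $ k"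
    by (simp only: fps_deriv_exp_trunc)
  also have "\<dots> = (fps_deriv M * fps_exp_alg sc M) $ k"
  proof -
    have "exp_trunc M k $ i = fps_exp_alg sc M $ i" if "i \<le> k" for i
      using fps_exp_alg_nth_eq_exp_trunc_nth[OF assms that] by simp
    then show ?thesis by (simp add: fps_mult_nth)
  qed
  finally show "fps_deriv (fps_exp_alg sc M) $ k = (fps_deriv M * fps_exp_alg sc M) $ k" .
qed

lemma fps_exp_alg_0 [simp]: "fps_exp_alg sc 0 = 1"
  by (rule fps_ext) (auto simp: fps_exp_alg_nth power_0_left of_scalar.one intro!: sum.neutral)

lemma fps_exp_alg_inj:
  assumes "M $ 0 = 0" and "N $ 0 = 0" and "fps_exp_alg sc M = fps_exp_alg sc N"
  shows "M = N"
proof (rule fps_eq_if_deriv_eq)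
  let ?E = "fps_exp_alg sc M"
  have "?E * fps_right_inverse ?E 1 = 1"
    by (rule fps_right_inverse) simp
  moreover have "fps_deriv M * ?E = fps_deriv N * ?E"
    using fps_deriv_fps_exp_alg assms by metis
  ultimately show "fps_deriv M = fps_deriv N"
    by (metis mult.assoc mult_1_right)
qed (use assms in simp)

lemma fps_ln1p_nth:
  "fps_ln1p sc a $ k = (if k = 0 then 0 else of_scalar sc ((- 1) ^ (k - 1) / of_nat k) * a ^ k)"
  unfolding fps_ln1p_def by (simp add: scale_eq_of_scalar_mult)

lemma fps_deriv_fps_ln1p_nth: "fps_deriv (fps_ln1p sc a) $ k = (- 1) ^ k * a ^ Suc k"
proof -
  have "(of_nat (Suc k) :: 'k) * ((- 1) ^ k / of_nat (Suc k)) = (- 1) ^ k"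
    by (simp del: of_nat_Suc)
  then have "of_nat (Suc k) * of_scalar sc ((- 1) ^ k / of_nat (Suc k)) = (- 1) ^ k"
    by (metis of_scalar.mult of_scalar.of_nat of_scalar.power of_scalar.minus of_scalar.one)
  then show ?thesis
    by (simp add: fps_ln1p_nth mult.assoc[symmetric] del: of_nat_Suc)
qed

lemma fps_ln1p_ode: "(1 + fps_const a * fps_X) * fps_deriv (fps_ln1p sc a) = fps_const a"
proof (rule fps_ext)
  fix k
  have "((1 + fps_const a * fps_X) * fps_deriv (fps_ln1p sc a)) $ k =
      fps_deriv (fps_ln1p sc a) $ k + a * (fps_X * fps_deriv (fps_ln1p sc a)) $ k"
    by (simp add: algebra_simps)
  then show "((1 + fps_const a * fps_X) * fps_deriv (fps_ln1p sc a)) $ k = fps_const a $ k"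
    by (cases k) (simp_all add: fps_deriv_fps_ln1p_nth del: fps_deriv_nth)
qed

lemma fps_ode_unique:
  fixes D :: "'a fps"
  assumes "(1 + fps_const a * fps_X) * fps_deriv D = fps_const a * D" and "D $ 0 = 0"
  shows "D = 0"
proof -
  have "D $ k = 0" for k
  proof (induction k)
    case (Suc j)
    have "fps_deriv D $ j = ((1 + fps_const a * fps_X) * fps_deriv D) $ j"
      using Suc.IH by (cases j) (simp_all add: algebra_simps)
    also have "\<dots> = 0"
      using Suc.IH by (simp add: assms(1))
    finally have "of_nat (Suc j) * D $ Suc j = of_nat (Suc j) * 0"
      by simp
    then show ?case
      by (rule of_nat_mult_cancel[rotated]) simp
  qed (use assms(2) in simp)
  then show ?thesis
    by (intro fps_ext) simp
qed

lemma fps_exp_alg_fps_ln1p: "fps_exp_alg sc (fps_ln1p sc a) = 1 + fps_const a * fps_X"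
proof -
  let ?G = "1 + fps_const a * fps_X" and ?E = "fps_exp_alg sc (fps_ln1p sc a)"
  have "fps_ln1p sc a $ 0 = 0"
    by (simp add: fps_ln1p_nth)
  then have "?G * fps_deriv ?E = fps_const a * ?E"
    by (simp only: fps_deriv_fps_exp_alg mult.assoc[symmetric] fps_ln1p_ode)
  then have "?G * fps_deriv (?E - ?G) = fps_const a * (?E - ?G)"
    by (simp add: algebra_simps)
  then have "?E - ?G = 0"
    by (rule fps_ode_unique) simp
  then show ?thesis by simp
qed

end

section \<open>Exponentials along ring homomorphisms\<close>

lemma fps_map_coeff_nth [simp]: "fps_map_coeff h X $ k = h (X $ k)"
  unfolding fps_map_coeff_def by simp

lemma fps_map_coeff_fps_map_coeff: "fps_map_coeff f (fps_map_coeff g X) = fps_map_coeff (f \<circ> g) X"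
  by (rule fps_ext) simp

lemma comm_ring_hom_fps_map_coeff:
  assumes "comm_ring_hom h"
  shows "comm_ring_hom (fps_map_coeff h)"
proof -
  interpret h: comm_ring_hom h by fact
  show ?thesis
    by unfold_locales (auto intro!: fps_ext simp: fps_mult_nth h.add h.sum h.mult h.one h.zero)
qed

(* exp M is an infinite sum of powers of M; causality of H lets each coefficient be computed
   from a finite truncation. *)
lemma fps_exp_alg_hom_commute:
  fixes sc1 :: "'k::field_char_0 \<Rightarrow> 'a::comm_ring_1 \<Rightarrow> 'a" and sc2 :: "'k \<Rightarrow> 'b::comm_ring_1 \<Rightarrow> 'b"
    and H :: "'a fps \<Rightarrow> 'b fps"
  assumes "comm_alg sc1" and "comm_alg sc2" and "comm_ring_hom H"
    and scalar: "\<And>c X. H (fps_const (of_scalar sc1 c) * X) = fps_const (of_scalar sc2 c) * H X"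
    and causal: "\<And>X Y k. (\<And>d. d \<le> k \<Longrightarrow> X $ d = Y $ d) \<Longrightarrow> H X $ k = H Y $ k"
    and "M $ 0 = 0" and "H M $ 0 = 0"
  shows "H (fps_exp_alg sc1 M) = fps_exp_alg sc2 (H M)"
proof (rule fps_ext)
  interpret A: comm_alg sc1 by fact
  interpret B: comm_alg sc2 by fact
  interpret H: comm_ring_hom H by fact
  fix k
  have "H (fps_exp_alg sc1 M) $ k = H (A.exp_trunc M k) $ k"
    using causal A.fps_exp_alg_nth_eq_exp_trunc_nth[OF \<open>M $ 0 = 0\<close>] by blast
  also have "H (A.exp_trunc M k) = B.exp_trunc (H M) k"
    by (simp add: A.exp_trunc_def B.exp_trunc_def H.sum scalar H.power)
  also have "B.exp_trunc (H M) k $ k = fps_exp_alg sc2 (H M) $ k"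
    using B.fps_exp_alg_nth_eq_exp_trunc_nth[OF \<open>H M $ 0 = 0\<close> order.refl] by simp
  finally show "H (fps_exp_alg sc1 M) $ k = fps_exp_alg sc2 (H M) $ k" .
qed

lemma fps_exp_alg_fps_map_coeff:
  fixes sc1 :: "'k::field_char_0 \<Rightarrow> 'a::comm_ring_1 \<Rightarrow> 'a" and sc2 :: "'k \<Rightarrow> 'b::comm_ring_1 \<Rightarrow> 'b"
  assumes "comm_alg sc1" and "comm_alg sc2" and "comm_ring_hom h"
    and "\<And>c x. h (of_scalar sc1 c * x) = of_scalar sc2 c * h x" and "M $ 0 = 0"
  shows "fps_map_coeff h (fps_exp_alg sc1 M) = fps_exp_alg sc2 (fps_map_coeff h M)"
proof (rule fps_exp_alg_hom_commute)
  interpret h: comm_ring_hom h by fact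
  show "comm_ring_hom (fps_map_coeff h)"
    using comm_ring_hom_fps_map_coeff assms(3) .
  show "fps_map_coeff h M $ 0 = 0"
    using assms(5) by (simp add: h.zero)
qed (use assms in \<open>auto intro!: fps_ext\<close>)

section \<open>Polynomials over an algebra and the diagonal substitution\<close>

definition poly_scale :: "('k::field_char_0 \<Rightarrow> 'a::comm_ring_1 \<Rightarrow> 'a) \<Rightarrow> 'k \<Rightarrow> 'a poly \<Rightarrow> 'a poly" where
  "poly_scale sc c p = smult (of_scalar sc c) p"

lemma of_scalar_poly_scale [simp]: "of_scalar (poly_scale sc) c = [:of_scalar sc c:]"
  unfolding of_scalar_def poly_scale_def by simp

lemma comm_alg_poly_scale:
  assumes "comm_alg sc"
  shows "comm_alg (poly_scale sc)"
proof -
  interpret comm_alg sc by fact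
  show ?thesis
    by unfold_locales (simp add: is_comm_alg_def poly_scale_def of_scalar.add of_scalar.mult
        of_scalar.one smult_add_right smult_add_left)
qed

lemma fps_ln1p_poly_scale_eval:
  assumes "comm_alg sc"
  shows "fps_map_coeff (\<lambda>p. poly p y) (fps_ln1p (poly_scale sc) a) = fps_ln1p sc (poly a y)"
proof -
  interpret comm_alg sc by fact
  interpret P: comm_alg "poly_scale sc"
    using comm_alg_poly_scale assms .
  show ?thesis
    by (rule fps_ext) (simp add: fps_ln1p_nth P.fps_ln1p_nth)
qed

(* Sends sum_d p_d(t) X^d to sum_d p_d(z) z^d. *)
definition fps_diag :: "'a::comm_ring_1 poly fps \<Rightarrow> 'a fps" where
  "fps_diag X = Abs_fps (\<lambda>k. \<Sum>d\<le>k. coeff (X $ d) (k - d))"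

lemma fps_diag_nth: "fps_diag X $ k = (\<Sum>d\<le>k. coeff (X $ d) (k - d))"
  unfolding fps_diag_def by simp

lemma fps_diag_add: "fps_diag (X + Y) = fps_diag X + fps_diag Y"
  by (rule fps_ext) (simp add: fps_diag_nth sum.distrib)

lemma fps_diag_fps_X_mult: "fps_diag (fps_X * X) = fps_X * fps_diag X"
proof (rule fps_ext)
  fix k show "fps_diag (fps_X * X) $ k = (fps_X * fps_diag X) $ k"
  proof (cases k)
    case (Suc j)
    have "fps_diag (fps_X * X) $ Suc j = (\<Sum>d\<le>Suc j. coeff ((fps_X * X) $ d) (Suc j - d))"
      by (rule fps_diag_nth)
    also have "\<dots> = (\<Sum>d\<le>j. coeff (X $ d) (j - d))"
      by (subst sum.atMost_Suc_shift) simp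
    finally show ?thesis
      using Suc by (simp add: fps_diag_nth)
  qed (simp add: fps_diag_nth)
qed

lemma fps_diag_fps_const: "fps_diag (fps_const p) = fps_of_poly p"
proof (rule fps_ext)
  fix k
  have "fps_diag (fps_const p) $ k = (\<Sum>d\<le>k. if d = 0 then coeff p k else 0)"
    unfolding fps_diag_nth by (intro sum.cong) auto
  then show "fps_diag (fps_const p) $ k = fps_of_poly p $ k" by simp
qed

lemma fps_diag_fps_const_mult: "fps_diag (fps_const p * X) = fps_of_poly p * fps_diag X"
proof (induction p arbitrary: X)
  case (pCons a p)
  have "fps_diag (fps_const [:a:] * X) = fps_const a * fps_diag X"
    by (rule fps_ext) (simp add: fps_diag_nth sum_distrib_left)
  moreover have "fps_diag (fps_const (pCons 0 p) * X) = fps_X * fps_diag (fps_const p * X)"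
  proof (rule fps_ext)
    fix k show "fps_diag (fps_const (pCons 0 p) * X) $ k = (fps_X * fps_diag (fps_const p * X)) $ k"
      by (cases k) (simp_all add: fps_diag_nth Suc_diff_le)
  qed
  moreover have "pCons a p = [:a:] + pCons 0 p" by simp
  ultimately have "fps_diag (fps_const (pCons a p) * X) =
      fps_const a * fps_diag X + fps_X * (fps_of_poly p * fps_diag X)"
    using pCons.IH by (simp only: distrib_right fps_diag_add flip: fps_const_add)
  then show ?case
    by (simp add: fps_of_poly_pCons algebra_simps)
qed (simp add: fps_eq_iff fps_diag_nth)

lemma fps_diag_mult: "fps_diag (X * Y) = fps_diag X * fps_diag Y"
proof (rule fps_ext)
  fix k show "fps_diag (X * Y) $ k = (fps_diag X * fps_diag Y) $ k"
  proof (induction k arbitrary: X)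
    case 0
    show ?case by (simp add: fps_diag_nth fps_mult_nth coeff_mult_0)
  next
    case (Suc j)
    define X' where "X' = Abs_fps (\<lambda>n. X $ Suc n)"
    have X: "X = fps_const (X $ 0) + fps_X * X'"
      by (rule fps_ext) (simp add: X'_def)
    have "fps_diag (X * Y) = fps_of_poly (X $ 0) * fps_diag Y + fps_X * fps_diag (X' * Y)"
      by (subst X) (simp only: distrib_right fps_diag_add fps_diag_fps_const_mult
          mult.assoc fps_diag_fps_X_mult)
    moreover have "fps_diag X * fps_diag Y =
        fps_of_poly (X $ 0) * fps_diag Y + fps_X * (fps_diag X' * fps_diag Y)"
      by (subst X) (simp only: distrib_right fps_diag_add fps_diag_fps_const
          mult.assoc fps_diag_fps_X_mult)
    ultimately show ?case
      using Suc.IH by simp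
  qed
qed

lemma comm_ring_hom_fps_diag: "comm_ring_hom fps_diag"
  by unfold_locales (simp_all add: fps_diag_add fps_diag_mult
      fps_diag_fps_const[of 1, simplified])

lemma fps_diag_fps_exp_alg:
  assumes "comm_alg sc" and "M $ 0 = 0"
  shows "fps_diag (fps_exp_alg (poly_scale sc) M) = fps_exp_alg sc (fps_diag M)"
proof (rule fps_exp_alg_hom_commute[OF comm_alg_poly_scale[OF assms(1)] assms(1)
      comm_ring_hom_fps_diag])
  show "fps_diag (fps_const (of_scalar (poly_scale sc) c) * X) =
      fps_const (of_scalar sc c) * fps_diag X" for c X
    by (simp add: fps_diag_fps_const_mult fps_of_poly_const)
qed (use assms(2) in \<open>simp_all add: fps_diag_nth\<close>)

section \<open>Extending n-homomorphisms to polynomial algebras\<close>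

lemma is_lin_map_additive: "is_lin_map scA scB f \<Longrightarrow> additive f"
  unfolding is_lin_map_def by unfold_locales blast

lemma is_lin_map_of_scalar_mult:
  assumes "comm_alg scA" and "comm_alg scB" and "is_lin_map scA scB f"
  shows "f (of_scalar scA c * x) = of_scalar scB c * f x"
  using assms unfolding is_lin_map_def by (metis comm_alg.scale_eq_of_scalar_mult)

lemma poly_map_poly_of_scalar:
  assumes "comm_alg scB" and "comm_alg scC" and "is_lin_map scB scC f"
  shows "poly (map_poly f p) (of_scalar scC l) = f (poly p (of_scalar scB l))"
proof -
  interpret f: additive f
    using is_lin_map_additive assms(3) .
  show ?thesis
    by (induction p) (simp_all add: map_poly_pCons f.zero f.add
        is_lin_map_of_scalar_mult[OF assms])
qed

lemma is_lin_map_map_poly: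
  assumes "comm_alg scB" and "comm_alg scC" and "is_lin_map scB scC f"
  shows "is_lin_map (poly_scale scB) (poly_scale scC) (map_poly f)"
proof -
  interpret f: additive f
    using is_lin_map_additive assms(3) .
  show ?thesis
    unfolding is_lin_map_def poly_scale_def
    by (auto intro!: poly_eqI simp: coeff_map_poly f.zero f.add is_lin_map_of_scalar_mult[OF assms])
qed

lemma char_fun_map_poly_eval:
  assumes "comm_alg scB" and "comm_alg scC" and "is_lin_map scB scC f"
  shows "fps_map_coeff (\<lambda>p. poly p (of_scalar scC l))
      (char_fun (poly_scale scB) (poly_scale scC) (map_poly f) a) =
    char_fun scB scC f (poly a (of_scalar scB l))"
proof -
  interpret B: comm_alg scB by fact
  interpret PB: comm_alg "poly_scale scB"
    using comm_alg_poly_scale assms(1) .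
  interpret f: additive f
    using is_lin_map_additive assms(3) .
  let ?ev = "\<lambda>p. poly p (of_scalar scC l)"
  let ?M = "fps_map_coeff (map_poly f) (fps_ln1p (poly_scale scB) a)"
  have "fps_map_coeff ?ev (fps_exp_alg (poly_scale scC) ?M) = fps_exp_alg scC (fps_map_coeff ?ev ?M)"
  proof (rule fps_exp_alg_fps_map_coeff[OF comm_alg_poly_scale[OF assms(2)] assms(2)])
    show "comm_ring_hom ?ev"
      by unfold_locales simp_all
    show "?M $ 0 = 0"
      by (simp add: PB.fps_ln1p_nth)
  qed simp
  also have "fps_map_coeff ?ev ?M =
      fps_map_coeff f (fps_map_coeff (\<lambda>p. poly p (of_scalar scB l)) (fps_ln1p (poly_scale scB) a))"
    by (rule fps_ext) (simp add: poly_map_poly_of_scalar[OF assms])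
  finally show ?thesis
    by (simp add: char_fun_def fps_ln1p_poly_scale_eval[OF assms(1)])
qed

lemma is_n_hom_map_poly:
  assumes "comm_alg scB" and "comm_alg scC" and "is_n_hom scB scC n f"
  shows "is_n_hom (poly_scale scB) (poly_scale scC) n (map_poly f)"
  unfolding is_n_hom_def
proof (intro conjI allI impI)
  interpret C: comm_alg scC by fact
  have lin: "is_lin_map scB scC f" and "f 1 = of_nat n"
    using assms(3) by (simp_all add: is_n_hom_def)
  show "is_lin_map (poly_scale scB) (poly_scale scC) (map_poly f)"
    using is_lin_map_map_poly[OF assms(1,2) lin] .
  show "map_poly f 1 = of_nat n"
    by (simp add: map_poly_1 \<open>f 1 = of_nat n\<close> of_nat_poly)
  fix a k assume "n < k"
  show "char_fun (poly_scale scB) (poly_scale scC) (map_poly f) a $ k = 0"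
  proof (rule C.poly_eq_0_if_vanishes_on_scalars)
    show "infinite (UNIV :: 'a set)"
      by (rule infinite_UNIV_char_0)
    show "poly (char_fun (poly_scale scB) (poly_scale scC) (map_poly f) a $ k) (of_scalar scC l) = 0"
      for l
      using arg_cong[OF char_fun_map_poly_eval[OF assms(1,2) lin], of "\<lambda>F. F $ k"] assms(3) \<open>n < k\<close>
      by (simp add: is_n_hom_def)
  qed
qed

section \<open>Degree bounds and composition\<close>

definition coeff_degree_le :: "nat \<Rightarrow> 'a::comm_ring_1 poly fps \<Rightarrow> bool" where
  "coeff_degree_le D X \<longleftrightarrow> (\<forall>d. degree (X $ d) \<le> D * d)"

lemma coeff_degree_le_mult:
  assumes "coeff_degree_le D X" and "coeff_degree_le D Y"
  shows "coeff_degree_le D (X * Y)"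
  unfolding coeff_degree_le_def fps_mult_nth
proof (intro allI degree_sum_le)
  fix d i :: nat assume "i \<in> {0..d}"
  then have "D * i + D * (d - i) = D * d"
    by (simp flip: add_mult_distrib2)
  then show "degree (X $ i * Y $ (d - i)) \<le> D * d"
    using assms unfolding coeff_degree_le_def
    by (metis add_le_mono degree_mult_le order_trans)
qed simp

lemma coeff_degree_le_power:
  assumes "coeff_degree_le D X"
  shows "coeff_degree_le D (X ^ j)"
proof (induction j)
  case 0
  show ?case by (simp add: coeff_degree_le_def)
next
  case (Suc j)
  then show ?case using assms by (simp add: coeff_degree_le_mult)
qed

lemma coeff_degree_le_fps_exp_alg:
  assumes "comm_alg sc" and "coeff_degree_le D M"
  shows "coeff_degree_le D (fps_exp_alg (poly_scale sc) M)"
proof -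
  interpret P: comm_alg "poly_scale sc"
    using comm_alg_poly_scale assms(1) .
  show ?thesis
    unfolding coeff_degree_le_def P.fps_exp_alg_nth of_scalar_poly_scale
    using coeff_degree_le_power[OF assms(2)]
    by (auto intro!: degree_sum_le simp: coeff_degree_le_def intro: order_trans[OF degree_smult_le])
qed

lemma coeff_degree_le_fps_map_coeff_map_poly:
  assumes "f 0 = 0" and "coeff_degree_le D X"
  shows "coeff_degree_le D (fps_map_coeff (map_poly f) X)"
proof -
  have "degree (map_poly f p) \<le> degree p" for p
    by (rule degree_le) (simp add: coeff_map_poly assms(1) coeff_eq_0)
  then show ?thesis
    using assms(2) unfolding coeff_degree_le_def by (metis fps_map_coeff_nth order_trans)
qed

lemma coeff_degree_le_fps_ln1p:
  assumes "comm_alg sc" and "degree a \<le> D"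
  shows "coeff_degree_le D (fps_ln1p (poly_scale sc) a)"
proof -
  interpret P: comm_alg "poly_scale sc"
    using comm_alg_poly_scale assms(1) .
  have "degree (a ^ d) \<le> D * d" for d
    using degree_power_le[of a d] assms(2) by (metis mult.commute mult_le_mono2 order_trans)
  then show ?thesis
    unfolding coeff_degree_le_def P.fps_ln1p_nth of_scalar_poly_scale
    by (auto intro: order_trans[OF degree_smult_le])
qed

lemma fps_diag_nth_eq_0:
  assumes "coeff_degree_le D W" and "\<And>d. n < d \<Longrightarrow> W $ d = 0" and "Suc D * n < k"
  shows "fps_diag W $ k = 0"
  unfolding fps_diag_nth
proof (rule sum.neutral, intro ballI)
  fix d assume "d \<in> {..k}"
  show "coeff (W $ d) (k - d) = 0"
  proof (cases "n < d")
    case False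
    then have "Suc D * d < k"
      using assms(3) by (meson le_less_trans mult_le_mono2 not_less)
    then have "degree (W $ d) < k - d"
      using assms(1) unfolding coeff_degree_le_def by (metis add.commute le_less_trans less_diff_conv mult_Suc)
    then show ?thesis
      by (simp add: coeff_eq_0)
  qed (simp add: assms(2))
qed

definition fps_degree_le :: "nat \<Rightarrow> 'a::zero fps \<Rightarrow> bool" where
  "fps_degree_le m P \<longleftrightarrow> (\<forall>k>m. P $ k = 0)"

lemma fps_degree_le_obtain_poly:
  fixes P :: "'a::comm_ring_1 fps"
  assumes "P $ 0 = 1" and "fps_degree_le m P"
  obtains a where "degree a \<le> m - 1" and "P = 1 + fps_X * fps_of_poly a"
proof
  let ?a = "\<Sum>j<m. monom (P $ Suc j) j"
  show "degree ?a \<le> m - 1"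
    by (rule degree_sum_le) (auto intro: order_trans[OF degree_monom_le])
  have coeff: "coeff ?a j = (if j < m then P $ Suc j else 0)" for j
    by (simp add: coeff_sum coeff_monom)
  show "P = 1 + fps_X * fps_of_poly ?a"
  proof (rule fps_ext)
    fix k show "P $ k = (1 + fps_X * fps_of_poly ?a) $ k"
      using assms coeff by (cases k) (auto simp: fps_degree_le_def)
  qed
qed

lemma fps_exp_alg_map_coeff_eq_fps_diag:
  assumes "comm_alg scB" and "comm_alg scC" and "is_lin_map scB scC f" and "L $ 0 = 0"
    and "fps_exp_alg scB L = 1 + fps_X * fps_of_poly a"
  shows "fps_exp_alg scC (fps_map_coeff f L) =
    fps_diag (char_fun (poly_scale scB) (poly_scale scC) (map_poly f) a)"
proof -
  interpret B: comm_alg scB by fact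
  interpret PB: comm_alg "poly_scale scB"
    using comm_alg_poly_scale assms(1) .
  interpret diag: comm_ring_hom fps_diag
    by (rule comm_ring_hom_fps_diag)
  interpret f: additive f
    using is_lin_map_additive assms(3) .
  let ?l = "fps_ln1p (poly_scale scB) a"
  have l0: "?l $ 0 = 0"
    by (simp add: PB.fps_ln1p_nth)
  have "fps_exp_alg scB (fps_diag ?l) = fps_diag (fps_exp_alg (poly_scale scB) ?l)"
    by (rule fps_diag_fps_exp_alg[symmetric, OF assms(1) l0])
  also have "\<dots> = fps_exp_alg scB L"
    by (simp add: PB.fps_exp_alg_fps_ln1p assms(5) diag.add diag.one fps_diag_fps_X_mult
        fps_diag_fps_const mult.commute)
  finally have "fps_diag ?l = L"
    by (rule B.fps_exp_alg_inj[rotated 2]) (simp_all add: fps_diag_nth l0 assms(4))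
  then have "fps_map_coeff f L = fps_diag (fps_map_coeff (map_poly f) ?l)"
    by (auto intro!: fps_ext simp: fps_diag_nth coeff_map_poly f.zero f.sum)
  then show ?thesis
    unfolding char_fun_def using fps_diag_fps_exp_alg[OF assms(2)] l0 by (simp add: f.zero)
qed

lemma fps_degree_le_exp_alg_map_coeff:
  assumes "comm_alg scB" and "comm_alg scC" and f: "is_n_hom scB scC n f" and "L $ 0 = 0"
    and deg: "fps_degree_le m (fps_exp_alg scB L)"
  shows "fps_degree_le (n * m) (fps_exp_alg scC (fps_map_coeff f L))"
proof (cases "m = 0")
  case True
  \<comment> \<open>exp L = 1; the diagonal argument below would only give the bound n here.\<close>
  interpret B: comm_alg scB by fact
  interpret C: comm_alg scC by fact
  interpret f: additive f
    using f is_lin_map_additive unfolding is_n_hom_def by blast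
  have "fps_exp_alg scB L = fps_exp_alg scB 0"
    using deg True by (auto intro!: fps_ext simp: fps_degree_le_def)
  then have "L = 0"
    by (rule B.fps_exp_alg_inj[rotated 2]) (simp_all add: \<open>L $ 0 = 0\<close>)
  then have "fps_map_coeff f L = 0"
    by (auto intro!: fps_ext simp: f.zero)
  then show ?thesis
    using True by (simp add: fps_degree_le_def)
next
  case False
  interpret B: comm_alg scB by fact
  obtain a where "degree a \<le> m - 1" and P: "fps_exp_alg scB L = 1 + fps_X * fps_of_poly a"
    using fps_degree_le_obtain_poly[OF B.fps_exp_alg_nth_0 deg] by blast
  let ?W = "char_fun (poly_scale scB) (poly_scale scC) (map_poly f) a"
  have f_lin: "is_lin_map scB scC f" and "f 0 = 0"
    using f unfolding is_n_hom_def by (auto intro: additive.zero is_lin_map_additive)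
  have "fps_diag ?W $ k = 0" if "n * m < k" for k
  proof (rule fps_diag_nth_eq_0)
    show "coeff_degree_le (m - 1) ?W"
      unfolding char_fun_def
      by (intro coeff_degree_le_fps_exp_alg coeff_degree_le_fps_map_coeff_map_poly
          coeff_degree_le_fps_ln1p assms \<open>f 0 = 0\<close> \<open>degree a \<le> m - 1\<close>)
    show "?W $ d = 0" if "n < d" for d
      using is_n_hom_map_poly[OF assms(1-3)] that unfolding is_n_hom_def by blast
    show "Suc (m - 1) * n < k"
      using \<open>n * m < k\<close> \<open>m \<noteq> 0\<close> by (simp add: mult.commute)
  qed
  then show ?thesis
    unfolding fps_degree_le_def
    by (simp add: fps_exp_alg_map_coeff_eq_fps_diag[OF assms(1,2) f_lin \<open>L $ 0 = 0\<close> P])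
qed

lemma is_n_hom_comp:
  assumes "comm_alg scA" and "comm_alg scB" and "comm_alg scC"
    and g: "is_n_hom scA scB m g" and f: "is_n_hom scB scC n f"
  shows "is_n_hom scA scC (n * m) (f \<circ> g)"
proof -
  interpret A: comm_alg scA by fact
  interpret f: additive f
    using f is_lin_map_additive unfolding is_n_hom_def by blast
  interpret g: additive g
    using g is_lin_map_additive unfolding is_n_hom_def by blast
  have "is_lin_map scA scC (f \<circ> g)"
    using f g unfolding is_n_hom_def is_lin_map_def by simp
  moreover have "(f \<circ> g) 1 = of_nat (n * m)"
    using f g f.sum[of "\<lambda>_. 1" "{..<m}"] unfolding is_n_hom_def by simp
  moreover have "fps_degree_le (n * m) (char_fun scA scC (f \<circ> g) a)" for a
  proof -
    let ?L = "fps_map_coeff g (fps_ln1p scA a)"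
    have "fps_degree_le m (fps_exp_alg scB ?L)"
      using g unfolding is_n_hom_def char_fun_def fps_degree_le_def by blast
    then have "fps_degree_le (n * m) (fps_exp_alg scC (fps_map_coeff f ?L))"
      by (rule fps_degree_le_exp_alg_map_coeff[OF assms(2,3) f, rotated])
        (simp add: A.fps_ln1p_nth g.zero)
    then show ?thesis
      by (simp add: char_fun_def fps_map_coeff_fps_map_coeff)
  qed
  ultimately show ?thesis
    unfolding is_n_hom_def fps_degree_le_def by blast
qed

theorem mainTheorem3:
  shows "(\<forall>(scA :: real \<Rightarrow> 'a::comm_ring_1 \<Rightarrow> 'a) (scB :: real \<Rightarrow> 'b::comm_ring_1 \<Rightarrow> 'b)
            (scC :: real \<Rightarrow> 'c::comm_ring_1 \<Rightarrow> 'c) (g :: 'a \<Rightarrow> 'b) (f :: 'b \<Rightarrow> 'c) m n.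
            is_comm_alg scA \<and> is_comm_alg scB \<and> is_comm_alg scC \<and>
            is_n_hom scA scB m g \<and> is_n_hom scB scC n f \<longrightarrow>
            is_n_hom scA scC (n * m) (f \<circ> g)) \<and>
         (\<forall>(scA :: complex \<Rightarrow> 'a \<Rightarrow> 'a) (scB :: complex \<Rightarrow> 'b \<Rightarrow> 'b)
            (scC :: complex \<Rightarrow> 'c \<Rightarrow> 'c) (g :: 'a \<Rightarrow> 'b) (f :: 'b \<Rightarrow> 'c) m n.
            is_comm_alg scA \<and> is_comm_alg scB \<and> is_comm_alg scC \<and>
            is_n_hom scA scB m g \<and> is_n_hom scB scC n f \<longrightarrow>
            is_n_hom scA scC (n * m) (f \<circ> g))"
  by (auto intro: is_n_hom_comp simp: comm_alg_def)

end
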